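(* Let $\mathcal L$ be a lattice in $\mathbb R^2$ and $n\ge2$ an integer. Then there is a convex curve $\mathcal C$ of length $L$ that contains exactly $n$ points of $\mathcal L$, such that, with $$R_1=\min_{P\in\mathcal C}\rho(P),\qquad R_2=\max_{P\in\mathcal C}\rho(P),$$ the inequalities $$\frac{L}{(A_{\mathcal L}R_1)^{1/3}}\le\left(\frac{\tau(\mathcal C)R_2}{A_{\mathcal L}R_1}\right)^{1/3}L^{2/3}\le\frac{\tau(\mathcal C)R_2}{(A_{\mathcal L}R_1)^{1/3}}<n+2$$ hold, where $\tau(\mathcal C)=\int_{\mathcal C}\kappa\,ds$.
   Context: A lattice is a set $\mathcal L=\mathcal L(v_0,v_1,v_2)=\{v_0+mv_1+nv_2: m,n\in\mathbb Z\}$ where $v_0,v_1,v_2\in\mathbb R^2$ and $v_1,v_2$ are linearly independent. Its invariant is $A_{\mathcal L}=|\det(v_1,v_2)|$. All curves are of class $C^2$ with nonvanishing first and second derivative vectors, oriented so that the curvature $\kappa$ is positive; a convex curve is such a curve. The radius of curvature is $\rho=1/\kappa$, $s$ is arclength, and $\tau(\mathcal C)=\int_{\mathcal C}\kappa\,ds$ is the total curvature. *)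

theory Defs
  imports "HOL-Analysis.Analysis"
begin

definition det2 :: "real^2 \<Rightarrow> real^2 \<Rightarrow> real" where
  "det2 u v = u$1 * v$2 - u$2 * v$1"

definition lattice :: "real^2 \<Rightarrow> real^2 \<Rightarrow> real^2 \<Rightarrow> (real^2) set" where
  "lattice v0 v1 v2 = {v0 + of_int m *\<^sub>R v1 + of_int n *\<^sub>R v2 | m n. True}"

definition lattice_invariant :: "real^2 \<Rightarrow> real^2 \<Rightarrow> real" where
  "lattice_invariant v1 v2 = \<bar>det2 v1 v2\<bar>"

definition d1 :: "(real \<Rightarrow> real^2) \<Rightarrow> real \<Rightarrow> real \<Rightarrow> real \<Rightarrow> real^2" where
  "d1 \<gamma> a b t = vector_derivative \<gamma> (at t within {a..b})"

definition d2 :: "(real \<Rightarrow> real^2) \<Rightarrow> real \<Rightarrow> real \<Rightarrow> real \<Rightarrow> real^2" where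
  "d2 \<gamma> a b t = vector_derivative (d1 \<gamma> a b) (at t within {a..b})"

definition curvature :: "(real \<Rightarrow> real^2) \<Rightarrow> real \<Rightarrow> real \<Rightarrow> real \<Rightarrow> real" where
  "curvature \<gamma> a b t = det2 (d1 \<gamma> a b t) (d2 \<gamma> a b t) / norm (d1 \<gamma> a b t) ^ 3"

definition radius_curv :: "(real \<Rightarrow> real^2) \<Rightarrow> real \<Rightarrow> real \<Rightarrow> real \<Rightarrow> real" where
  "radius_curv \<gamma> a b t = 1 / curvature \<gamma> a b t"

definition convex_curve :: "(real \<Rightarrow> real^2) \<Rightarrow> real \<Rightarrow> real \<Rightarrow> bool" where
  "convex_curve \<gamma> a b \<longleftrightarrow> a < b \<and> inj_on \<gamma> {a..b} \<and>
     (\<forall>t\<in>{a..b}. (\<gamma> has_vector_derivative d1 \<gamma> a b t) (at t within {a..b}) \<and>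
                  (d1 \<gamma> a b has_vector_derivative d2 \<gamma> a b t) (at t within {a..b}) \<and>
                  d1 \<gamma> a b t \<noteq> 0 \<and> d2 \<gamma> a b t \<noteq> 0 \<and> curvature \<gamma> a b t > 0) \<and>
     continuous_on {a..b} (d2 \<gamma> a b)"

definition curve_length :: "(real \<Rightarrow> real^2) \<Rightarrow> real \<Rightarrow> real \<Rightarrow> real" where
  "curve_length \<gamma> a b = integral {a..b} (\<lambda>t. norm (d1 \<gamma> a b t))"

definition total_curvature :: "(real \<Rightarrow> real^2) \<Rightarrow> real \<Rightarrow> real \<Rightarrow> real" where
  "total_curvature \<gamma> a b = integral {a..b} (\<lambda>t. curvature \<gamma> a b t * norm (d1 \<gamma> a b t))"

end

theory Submission
  imports Defs "HOL-Real_Asymp.Real_Asymp"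
begin

text \<open>In lattice coordinates take the parabola gamma(t) = v0 + (t(t-1)/2) p + t q. Since t(t-1)/2
  is an integer for integer t, and the q-coordinate of a lattice point is an integer, gamma meets
  the lattice L(v0,p,q) exactly at the integer parameters; so its arc over T, ..., T+n-1 carries
  exactly n lattice points. Its velocity is (t - 1/2) p + q and its acceleration is p, so its
  curvature is det(q,p) / |gamma'|^3 with det(q,p) = A. If the speed stays between m and M on
  the arc, then tau <= (n-1) A / m^2, R2 <= M^3 / A and A R1 >= m^3, hence
  tau R2 / (A R1)^(1/3) <= (n-1) (M/m)^3. Far out along the parabola M/m tends to 1, which makes this
  smaller than n + 2. The remaining two inequalities hold for every convex curve: they only use
  L <= tau R2, which is ds = rho kappa ds <= R2 kappa ds integrated.\<close>

lemma det2_swap: "det2 v u = - det2 u v"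
  unfolding det2_def by simp

lemma independent_pair_scaleR_eq_0:
  fixes u v :: "'a::real_vector"
  assumes "independent {u, v}" "u \<noteq> v" "\<alpha> *\<^sub>R u + \<beta> *\<^sub>R v = 0"
  shows "\<alpha> = 0 \<and> \<beta> = 0"
proof -
  let ?c = "\<lambda>w. if w = u then \<alpha> else \<beta>"
  have "(\<Sum>w\<in>{u, v}. ?c w *\<^sub>R w) = 0"
    using assms(2,3) by simp
  then have "?c w = 0" if "w \<in> {u, v}" for w
    using real_vector.independentD[where u = ?c, OF assms(1) _ order_refl _ that] by simp
  from this[of u] this[of v] show ?thesis
    using assms(2) by simp
qed

lemma det2_neq_0_if_independent:
  assumes "independent {u, v}" "u \<noteq> v"
  shows "det2 u v \<noteq> 0"
proof
  assume "det2 u v = 0"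
  then have "(v$1) *\<^sub>R u + (- u$1) *\<^sub>R v = 0" "(v$2) *\<^sub>R u + (- u$2) *\<^sub>R v = 0"
    by (auto simp: vec_eq_iff forall_2 det2_def algebra_simps)
  then have "v$1 = 0 \<and> - u$1 = 0" "v$2 = 0 \<and> - u$2 = 0"
    using independent_pair_scaleR_eq_0[OF assms] by blast+
  then have "u = v"
    by (simp add: vec_eq_iff forall_2)
  with assms(2) show False ..
qed

lemma det2_scaleR_add_eq_0D:
  assumes "det2 p q \<noteq> 0" "\<alpha> *\<^sub>R p + \<beta> *\<^sub>R q = 0"
  shows "\<alpha> = 0 \<and> \<beta> = 0"
proof -
  have "\<alpha> * p$1 + \<beta> * q$1 = 0" "\<alpha> * p$2 + \<beta> * q$2 = 0"
    using assms(2) by (auto simp: vec_eq_iff forall_2)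
  then have "\<alpha> * det2 p q = 0" "\<beta> * det2 p q = 0"
    unfolding det2_def by algebra+
  with assms(1) show ?thesis
    by simp
qed

lemma lattice_swap: "lattice v0 v2 v1 = lattice v0 v1 v2"
proof -
  have "v0 + of_int m *\<^sub>R v2 + of_int n *\<^sub>R v1 = v0 + of_int n *\<^sub>R v1 + of_int m *\<^sub>R v2"
    for m n :: int
    by (simp add: algebra_simps)
  then show ?thesis
    unfolding lattice_def by (simp only:) blast
qed

lemma curve_length_nonneg: "0 \<le> curve_length \<gamma> a b"
  unfolding curve_length_def
  by (cases "(\<lambda>t. norm (d1 \<gamma> a b t)) integrable_on {a..b}")
    (simp_all add: integral_nonneg not_integrable_integral)

lemma convex_curve_continuous_on_d1:
  assumes "convex_curve \<gamma> a b"
  shows "continuous_on {a..b} (d1 \<gamma> a b)"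
  using assms unfolding convex_curve_def continuous_on_eq_continuous_within
  by (blast intro: has_vector_derivative_continuous)

lemma convex_curve_continuous_on_curvature:
  assumes "convex_curve \<gamma> a b"
  shows "continuous_on {a..b} (curvature \<gamma> a b)"
  using assms convex_curve_continuous_on_d1[OF assms]
  unfolding convex_curve_def curvature_def det2_def
  by (intro continuous_intros) auto

lemma convex_curve_length_le:
  assumes "convex_curve \<gamma> a b"
  shows "curve_length \<gamma> a b \<le> total_curvature \<gamma> a b * Sup (radius_curv \<gamma> a b ` {a..b})"
proof -
  define R2 where "R2 = Sup (radius_curv \<gamma> a b ` {a..b})"
  let ?\<kappa> = "curvature \<gamma> a b" and ?v = "\<lambda>t. norm (d1 \<gamma> a b t)"
  have \<kappa>_pos: "?\<kappa> t > 0" if "t \<in> {a..b}" for t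
    using assms that by (simp add: convex_curve_def)
  have cont_\<kappa>: "continuous_on {a..b} ?\<kappa>"
    using assms by (rule convex_curve_continuous_on_curvature)
  have cont_v: "continuous_on {a..b} ?v"
    using convex_curve_continuous_on_d1[OF assms] by (intro continuous_intros)
  have "\<forall>t\<in>{a..b}. ?\<kappa> t \<noteq> 0"
    using \<kappa>_pos by (metis less_irrefl)
  then have "continuous_on {a..b} (radius_curv \<gamma> a b)"
    unfolding radius_curv_def using cont_\<kappa> by (intro continuous_intros)
  then have "bdd_above (radius_curv \<gamma> a b ` {a..b})"
    by (intro bounded_imp_bdd_above compact_imp_bounded compact_continuous_image) auto
  then have R2: "radius_curv \<gamma> a b t \<le> R2" if "t \<in> {a..b}" for t
    unfolding R2_def using that by (intro cSup_upper) auto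
  have "integral {a..b} ?v \<le> integral {a..b} (\<lambda>t. R2 * (?\<kappa> t * ?v t))"
  proof (rule integral_le)
    show "?v integrable_on {a..b}"
      using cont_v by (rule integrable_continuous_interval)
    show "(\<lambda>t. R2 * (?\<kappa> t * ?v t)) integrable_on {a..b}"
      using cont_\<kappa> cont_v
      by (intro integrable_continuous_interval continuous_on_mult continuous_on_const)
    fix t assume t: "t \<in> {a..b}"
    have "?v t = radius_curv \<gamma> a b t * (?\<kappa> t * ?v t)"
      using \<kappa>_pos[OF t] by (simp add: radius_curv_def)
    also have "\<dots> \<le> R2 * (?\<kappa> t * ?v t)"
      using R2[OF t] \<kappa>_pos[OF t] by (intro mult_right_mono) auto
    finally show "?v t \<le> R2 * (?\<kappa> t * ?v t)" .
  qed
  then show ?thesis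
    unfolding curve_length_def total_curvature_def R2_def by (simp add: mult.commute)
qed

lemma total_curvature_nonneg:
  assumes "convex_curve \<gamma> a b"
  shows "0 \<le> total_curvature \<gamma> a b"
proof (cases "(\<lambda>t. curvature \<gamma> a b t * norm (d1 \<gamma> a b t)) integrable_on {a..b}")
  case True
  have "0 \<le> curvature \<gamma> a b t * norm (d1 \<gamma> a b t)" if "t \<in> {a..b}" for t
    using assms that by (simp add: convex_curve_def less_imp_le)
  with True show ?thesis
    unfolding total_curvature_def by (rule integral_nonneg)
qed (simp add: total_curvature_def not_integrable_integral)

lemma powr_one_third_interpolate:
  fixes L Z Y :: real
  assumes "0 \<le> L" "L \<le> Z" "0 \<le> Y"
  shows "L / Y powr (1/3) \<le> (Z / Y) powr (1/3) * L powr (2/3)"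
    and "(Z / Y) powr (1/3) * L powr (2/3) \<le> Z / Y powr (1/3)"
proof -
  have split: "x = x powr (1/3) * x powr (2/3)" if "0 \<le> x" for x :: real
    using that by (simp add: powr_add[symmetric])
  have mid: "(Z / Y) powr (1/3) * L powr (2/3) = Z powr (1/3) * L powr (2/3) / Y powr (1/3)"
    using assms by (simp add: powr_divide)
  have "L powr (1/3) * L powr (2/3) \<le> Z powr (1/3) * L powr (2/3)"
    using assms by (intro mult_right_mono powr_mono2) auto
  then show "L / Y powr (1/3) \<le> (Z / Y) powr (1/3) * L powr (2/3)"
    unfolding mid using split[OF assms(1)] by (simp add: divide_right_mono)
  have "Z powr (1/3) * L powr (2/3) \<le> Z powr (1/3) * Z powr (2/3)"
    using assms by (intro mult_left_mono powr_mono2) auto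
  then show "(Z / Y) powr (1/3) * L powr (2/3) \<le> Z / Y powr (1/3)"
    unfolding mid using split[of Z] assms by (simp add: divide_right_mono)
qed

definition parabola :: "real^2 \<Rightarrow> real^2 \<Rightarrow> real^2 \<Rightarrow> real \<Rightarrow> real^2" where
  "parabola v0 p q t = v0 + (t * (t - 1) / 2) *\<^sub>R p + t *\<^sub>R q"

lemma parabola_has_vector_derivative:
  "(parabola v0 p q has_vector_derivative ((t - 1/2) *\<^sub>R p + q)) (at t)"
  unfolding parabola_def [abs_def]
  by (auto intro!: derivative_eq_intros simp: field_simps simp flip: scaleR_add_left)

lemma d1_parabola:
  assumes "a < b" "t \<in> {a..b}"
  shows "d1 (parabola v0 p q) a b t = (t - 1/2) *\<^sub>R p + q"
  unfolding d1_def using assms has_vector_derivative_at_within[OF parabola_has_vector_derivative]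
  by (rule vector_derivative_within_closed_interval)

lemma d1_parabola_has_vector_derivative:
  assumes "a < b" "t \<in> {a..b}"
  shows "(d1 (parabola v0 p q) a b has_vector_derivative p) (at t within {a..b})"
proof -
  have "d1 (parabola v0 p q) a b s = (s - 1/2) *\<^sub>R p + q" if "s \<in> {a..b}" for s
    using assms(1) that by (rule d1_parabola)
  moreover have "((\<lambda>s. (s - 1/2) *\<^sub>R p + q) has_vector_derivative p) (at t within {a..b})"
    by (rule derivative_eq_intros refl | simp)+
  ultimately show ?thesis
    by (rule has_vector_derivative_transform[OF assms(2)])
qed

lemma d2_parabola:
  assumes "a < b" "t \<in> {a..b}"
  shows "d2 (parabola v0 p q) a b t = p"
  unfolding d2_def using assms d1_parabola_has_vector_derivative[OF assms]
  by (rule vector_derivative_within_closed_interval)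

lemma curvature_parabola:
  assumes "a < b" "t \<in> {a..b}"
  shows "curvature (parabola v0 p q) a b t = det2 q p / norm ((t - 1/2) *\<^sub>R p + q) ^ 3"
proof -
  have "det2 ((t - 1/2) *\<^sub>R p + q) p = det2 q p"
    unfolding det2_def by (simp add: algebra_simps)
  then show ?thesis
    unfolding curvature_def d1_parabola[OF assms] d2_parabola[OF assms] by simp
qed

lemma parabola_diff:
  "parabola v0 p q s - parabola v0 p q t = (s * (s - 1) / 2 - t * (t - 1) / 2) *\<^sub>R p + (s - t) *\<^sub>R q"
  unfolding parabola_def by (simp add: scaleR_diff_left)

lemma inj_parabola:
  assumes "det2 p q \<noteq> 0"
  shows "inj (parabola v0 p q)"
proof (rule injI)
  fix s t assume "parabola v0 p q s = parabola v0 p q t"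
  then have "parabola v0 p q s - parabola v0 p q t = 0"
    by simp
  then have "(s * (s - 1) / 2 - t * (t - 1) / 2) *\<^sub>R p + (s - t) *\<^sub>R q = 0"
    by (simp only: parabola_diff)
  then have "s - t = 0"
    using det2_scaleR_add_eq_0D[OF assms] by blast
  then show "s = t"
    by simp
qed

lemma parabola_in_lattice_iff:
  assumes "det2 p q \<noteq> 0"
  shows "parabola v0 p q t \<in> lattice v0 p q \<longleftrightarrow> t \<in> \<int>"
proof
  assume "parabola v0 p q t \<in> lattice v0 p q"
  then obtain i k :: int where "parabola v0 p q t = v0 + of_int i *\<^sub>R p + of_int k *\<^sub>R q"
    unfolding lattice_def by blast
  then have "(t * (t - 1) / 2 - of_int i) *\<^sub>R p + (t - of_int k) *\<^sub>R q = 0"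
    by (simp add: parabola_def scaleR_diff_left algebra_simps)
  then have "t - of_int k = 0"
    using det2_scaleR_add_eq_0D[OF assms] by blast
  then show "t \<in> \<int>"
    by (simp add: algebra_simps)
next
  assume "t \<in> \<int>"
  then obtain k where t: "t = of_int k"
    by (auto elim: Ints_cases)
  have "t * (t - 1) / 2 = of_int (k * (k - 1) div 2)"
    unfolding t by (simp add: real_of_int_div)
  then have "parabola v0 p q t = v0 + of_int (k * (k - 1) div 2) *\<^sub>R p + of_int k *\<^sub>R q"
    unfolding parabola_def t by simp
  then show "parabola v0 p q t \<in> lattice v0 p q"
    unfolding lattice_def by blast
qed

lemma card_parabola_lattice_points:
  assumes "det2 p q \<noteq> 0"
  shows "card (parabola v0 p q ` {real T..real T + real n - 1} \<inter> lattice v0 p q) = n"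
proof -
  let ?I = "{real T..real T + real n - 1}"
  have ints: "?I \<inter> \<int> = real ` {T..<T + n}"
  proof (intro equalityI subsetI)
    fix x assume "x \<in> ?I \<inter> \<int>"
    then obtain k where k: "x = of_int k" "real T \<le> of_int k" "of_int k \<le> real T + real n - 1"
      by (auto elim: Ints_cases)
    then have "int T \<le> k" "k < int T + int n"
      by linarith+
    then have "x = real (nat k)" "nat k \<in> {T..<T + n}"
      using k(1) by auto
    then show "x \<in> real ` {T..<T + n}"
      by blast
  qed auto
  have "parabola v0 p q ` ?I \<inter> lattice v0 p q = parabola v0 p q ` (?I \<inter> \<int>)"
    by (auto simp: parabola_in_lattice_iff[OF assms])
  also have "\<dots> = parabola v0 p q ` real ` {T..<T + n}"
    by (simp only: ints)
  also have "card \<dots> = n"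
    using inj_parabola[OF assms] by (simp add: card_image inj_on_def)
  finally show ?thesis .
qed

lemma convex_curve_parabola:
  assumes "a < b" "det2 q p > 0" "\<And>t. t \<in> {a..b} \<Longrightarrow> (t - 1/2) *\<^sub>R p + q \<noteq> 0"
  shows "convex_curve (parabola v0 p q) a b"
  unfolding convex_curve_def
proof (intro conjI ballI)
  have "det2 p q \<noteq> 0"
    using assms(2) det2_swap[of q p] by simp
  then show "inj_on (parabola v0 p q) {a..b}"
    by (rule inj_on_subset[OF inj_parabola subset_UNIV])
  fix t assume t: "t \<in> {a..b}"
  show "(parabola v0 p q has_vector_derivative d1 (parabola v0 p q) a b t) (at t within {a..b})"
    unfolding d1_parabola[OF assms(1) t]
    by (rule has_vector_derivative_at_within[OF parabola_has_vector_derivative])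
  show "(d1 (parabola v0 p q) a b has_vector_derivative d2 (parabola v0 p q) a b t) (at t within {a..b})"
    unfolding d2_parabola[OF assms(1) t] using assms(1) t by (rule d1_parabola_has_vector_derivative)
  show "d1 (parabola v0 p q) a b t \<noteq> 0"
    unfolding d1_parabola[OF assms(1) t] using assms(3) t .
  show "d2 (parabola v0 p q) a b t \<noteq> 0"
    unfolding d2_parabola[OF assms(1) t] using assms(2) by (auto simp: det2_def)
  show "curvature (parabola v0 p q) a b t > 0"
    unfolding curvature_parabola[OF assms(1) t] using assms(2,3) t by simp
next
  show "continuous_on {a..b} (d2 (parabola v0 p q) a b)"
    using continuous_on_const by (rule continuous_on_eq) (simp add: d2_parabola[OF assms(1)])
qed (use assms(1) in simp)

lemma parabola_speed_bounds:
  assumes "1/2 \<le> a" "t \<in> {a..b}"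
  shows "(a - 1/2) * norm p - norm q \<le> norm ((t - 1/2) *\<^sub>R p + q) \<and>
    norm ((t - 1/2) *\<^sub>R p + q) \<le> (b - 1/2) * norm p + norm q"
proof -
  have "(a - 1/2) * norm p \<le> norm ((t - 1/2) *\<^sub>R p)" "norm ((t - 1/2) *\<^sub>R p) \<le> (b - 1/2) * norm p"
    using assms by (auto intro: mult_right_mono)
  then show ?thesis
    using norm_diff_ineq[of "(t - 1/2) *\<^sub>R p" q] norm_triangle_ineq[of "(t - 1/2) *\<^sub>R p" q]
    by linarith
qed

lemma parabola_radius_bounds:
  fixes v0 p q :: "real^2" and a b m M :: real
  defines "R \<equiv> radius_curv (parabola v0 p q) a b"
  assumes "a < b" "det2 q p > 0"
    and speed: "\<And>t. t \<in> {a..b} \<Longrightarrow> m \<le> norm ((t - 1/2) *\<^sub>R p + q) \<and> norm ((t - 1/2) *\<^sub>R p + q) \<le> M"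
    and "0 \<le> m"
  shows "m ^ 3 / det2 q p \<le> Inf (R ` {a..b})"
    and "Inf (R ` {a..b}) \<le> Sup (R ` {a..b})"
    and "Sup (R ` {a..b}) \<le> M ^ 3 / det2 q p"
proof -
  have bounds: "m ^ 3 / det2 q p \<le> R t \<and> R t \<le> M ^ 3 / det2 q p" if "t \<in> {a..b}" for t
  proof -
    have "R t = norm ((t - 1/2) *\<^sub>R p + q) ^ 3 / det2 q p"
      unfolding R_def radius_curv_def curvature_parabola[OF assms(2) that] by simp
    then show ?thesis
      using speed[OF that] assms(3,5) by (auto intro!: divide_right_mono power_mono)
  qed
  have ne: "R ` {a..b} \<noteq> {}"
    using assms(2) by simp
  show "m ^ 3 / det2 q p \<le> Inf (R ` {a..b})"
    using ne bounds by (intro cInf_greatest) auto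
  show "Inf (R ` {a..b}) \<le> Sup (R ` {a..b})"
    using ne bounds[THEN conjunct1] bounds[THEN conjunct2]
    by (intro cInf_le_cSup bdd_aboveI2 bdd_belowI2) auto
  show "Sup (R ` {a..b}) \<le> M ^ 3 / det2 q p"
    using ne bounds by (intro cSup_least) auto
qed

lemma parabola_total_curvature_le:
  assumes "a < b" "det2 q p > 0" "0 < m"
    and speed: "\<And>t. t \<in> {a..b} \<Longrightarrow> m \<le> norm ((t - 1/2) *\<^sub>R p + q)"
  shows "total_curvature (parabola v0 p q) a b \<le> (b - a) * det2 q p / m ^ 2"
proof -
  let ?v = "\<lambda>t. norm ((t - 1/2) *\<^sub>R p + q)"
  have v_pos: "?v t > 0" if "t \<in> {a..b}" for t
    using speed[OF that] assms(3) by linarith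
  have "total_curvature (parabola v0 p q) a b = integral {a..b} (\<lambda>t. det2 q p / ?v t ^ 2)"
    unfolding total_curvature_def
  proof (rule integral_cong)
    fix t assume t: "t \<in> {a..b}"
    show "curvature (parabola v0 p q) a b t * norm (d1 (parabola v0 p q) a b t) = det2 q p / ?v t ^ 2"
      unfolding curvature_parabola[OF assms(1) t] d1_parabola[OF assms(1) t]
      using v_pos[OF t] by (simp add: power2_eq_square power3_eq_cube)
  qed
  also have "\<dots> \<le> integral {a..b} (\<lambda>t. det2 q p / m ^ 2)"
  proof (rule integral_le)
    show "(\<lambda>t. det2 q p / ?v t ^ 2) integrable_on {a..b}"
      using v_pos by (intro integrable_continuous_interval continuous_intros) auto
    show "(\<lambda>t. det2 q p / m ^ 2) integrable_on {a..b}"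
      by (intro integrable_continuous_interval continuous_on_const)
    show "det2 q p / ?v t ^ 2 \<le> det2 q p / m ^ 2" if "t \<in> {a..b}" for t
      using speed[OF that] assms(2,3) by (intro divide_left_mono power_mono mult_pos_pos) auto
  qed
  also have "\<dots> = (b - a) * det2 q p / m ^ 2"
    using assms(1) by simp
  finally show ?thesis .
qed

lemma parabola_curvature_ratio_le:
  fixes v0 p q :: "real^2" and a b m M :: real
  defines "\<gamma> \<equiv> parabola v0 p q"
  defines "R1 \<equiv> Inf (radius_curv \<gamma> a b ` {a..b})" and "R2 \<equiv> Sup (radius_curv \<gamma> a b ` {a..b})"
  assumes "a < b" "det2 q p > 0" "0 < m"
    and speed: "\<And>t. t \<in> {a..b} \<Longrightarrow> m \<le> norm ((t - 1/2) *\<^sub>R p + q) \<and> norm ((t - 1/2) *\<^sub>R p + q) \<le> M"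
  shows "total_curvature \<gamma> a b * R2 / (det2 q p * R1) powr (1/3) \<le> (b - a) * (M / m) ^ 3"
proof -
  let ?A = "det2 q p" and ?\<tau> = "total_curvature \<gamma> a b"
  have R1: "m ^ 3 / ?A \<le> R1" and R12: "R1 \<le> R2" and R2: "R2 \<le> M ^ 3 / ?A"
    unfolding R1_def R2_def \<gamma>_def
    using parabola_radius_bounds[OF assms(4,5) speed less_imp_le[OF assms(6)]] by simp_all
  have "m ^ 3 \<le> ?A * R1"
    using R1 assms(5) by (simp add: pos_divide_le_eq mult.commute)
  then have "(m ^ 3) powr (1/3) \<le> (?A * R1) powr (1/3)"
    using assms(6) by (intro powr_mono2) auto
  then have m_le: "m \<le> (?A * R1) powr (1/3)"
    using assms(6) by (simp add: powr_powr flip: powr_numeral)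
  have R2_pos: "0 < R2"
    using R1 R12 divide_pos_pos[OF zero_less_power[OF assms(6)] assms(5), of 3] by linarith
  have "(t - 1/2) *\<^sub>R p + q \<noteq> 0" if "t \<in> {a..b}" for t
    using speed[OF that] assms(6) by auto
  then have "convex_curve \<gamma> a b"
    unfolding \<gamma>_def by (rule convex_curve_parabola[OF assms(4,5)])
  then have "?\<tau> * R2 / (?A * R1) powr (1/3) \<le> ?\<tau> * R2 / m"
    using m_le assms(6) R2_pos total_curvature_nonneg less_le_trans[OF assms(6) m_le]
    by (intro divide_left_mono mult_pos_pos) auto
  also have "\<dots> \<le> ((b - a) * ?A / m ^ 2) * (M ^ 3 / ?A) / m"
  proof -
    have "?\<tau> \<le> (b - a) * ?A / m ^ 2"
      unfolding \<gamma>_def by (rule parabola_total_curvature_le[OF assms(4,5,6)]) (use speed in blast)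
    then have "?\<tau> * R2 \<le> ((b - a) * ?A / m ^ 2) * (M ^ 3 / ?A)"
      using R2 R2_pos assms(4,5) by (intro mult_mono) auto
    then show ?thesis
      using assms(6) by (simp add: divide_right_mono)
  qed
  also have "\<dots> = (b - a) * (M / m) ^ 3"
    using assms(5) by (simp add: power_divide power2_eq_square power3_eq_cube)
  finally show ?thesis .
qed

text \<open>With P = norm p and Q = norm q, the quotient below bounds the ratio of the largest to the
  smallest speed of the parabola on the parameter interval [T, T + N - 1].\<close>

lemma eventually_far_arc_speed_ratio:
  fixes P Q N :: real
  assumes "0 < P"
  shows "\<forall>\<^sub>F T in sequentially. 1 \<le> real T \<and> 0 < (real T - 1/2) * P - Q \<and>
    (N - 1) * (((real T + N - 3/2) * P + Q) / ((real T - 1/2) * P - Q)) ^ 3 < N + 2"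
proof -
  have "((\<lambda>T. ((T + N - 3/2) * P + Q) / ((T - 1/2) * P - Q)) \<longlongrightarrow> 1) at_top"
    using assms by real_asymp
  then have "((\<lambda>T. (N - 1) * (((T + N - 3/2) * P + Q) / ((T - 1/2) * P - Q)) ^ 3) \<longlongrightarrow> (N - 1) * 1 ^ 3) at_top"
    by (intro tendsto_mult_left tendsto_power)
  then have "\<forall>\<^sub>F T in at_top. (N - 1) * (((T + N - 3/2) * P + Q) / ((T - 1/2) * P - Q)) ^ 3 < N + 2"
    by (rule order_tendstoD) simp
  moreover have "\<forall>\<^sub>F T in at_top. 0 < (T - 1/2) * P - Q"
    using assms by real_asymp
  ultimately have "\<forall>\<^sub>F T in at_top. 1 \<le> T \<and> 0 < (T - 1/2) * P - Q \<and>
      (N - 1) * (((T + N - 3/2) * P + Q) / ((T - 1/2) * P - Q)) ^ 3 < N + 2"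
    by (auto intro: eventually_conj eventually_ge_at_top)
  then show ?thesis
    by (rule eventually_compose_filterlim[OF _ filterlim_real_sequentially])
qed

lemma parabola_arc_exists:
  fixes v0 p q :: "real^2" and n :: nat
  defines "\<gamma> \<equiv> parabola v0 p q"
  assumes "det2 q p > 0" "2 \<le> n"
  obtains a b where "convex_curve \<gamma> a b" "card (\<gamma> ` {a..b} \<inter> lattice v0 p q) = n"
    "0 < det2 q p * Inf (radius_curv \<gamma> a b ` {a..b})"
    "total_curvature \<gamma> a b * Sup (radius_curv \<gamma> a b ` {a..b}) /
       (det2 q p * Inf (radius_curv \<gamma> a b ` {a..b})) powr (1/3) < real n + 2"
proof -
  have "0 < norm p"
    using assms(2) by (auto simp: det2_def)
  from eventually_far_arc_speed_ratio[OF this, of "norm q" "real n"]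
  obtain T :: nat where T: "1 \<le> real T" "0 < (real T - 1/2) * norm p - norm q"
    "(real n - 1) * (((real T + n - 3/2) * norm p + norm q) / ((real T - 1/2) * norm p - norm q)) ^ 3
       < real n + 2"
    unfolding eventually_sequentially by blast
  define a b m M where "a = real T" and "b = real T + real n - 1"
    and "m = (a - 1/2) * norm p - norm q" and "M = (b - 1/2) * norm p + norm q"
  have ab: "a < b"
    using assms(3) unfolding a_def b_def by simp
  have speed: "m \<le> norm ((t - 1/2) *\<^sub>R p + q) \<and> norm ((t - 1/2) *\<^sub>R p + q) \<le> M" if "t \<in> {a..b}" for t
    unfolding m_def M_def using T(1) that by (intro parabola_speed_bounds) (auto simp: a_def)
  have m_pos: "0 < m"
    using T(2) by (simp add: m_def a_def)
  have "(t - 1/2) *\<^sub>R p + q \<noteq> 0" if "t \<in> {a..b}" for t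
    using speed[OF that] m_pos by auto
  then have "convex_curve \<gamma> a b"
    unfolding \<gamma>_def by (rule convex_curve_parabola[OF ab assms(2)])
  moreover have "card (\<gamma> ` {a..b} \<inter> lattice v0 p q) = n"
    unfolding \<gamma>_def a_def b_def using assms(2) det2_swap[of q p]
    by (intro card_parabola_lattice_points) simp
  moreover have "0 < det2 q p * Inf (radius_curv \<gamma> a b ` {a..b})"
  proof -
    have "m ^ 3 / det2 q p \<le> Inf (radius_curv \<gamma> a b ` {a..b})"
      unfolding \<gamma>_def using ab assms(2) speed less_imp_le[OF m_pos] by (rule parabola_radius_bounds)
    with m_pos assms(2) show ?thesis
      by (simp add: pos_divide_le_eq mult.commute less_le_trans[OF zero_less_power])
  qed
  moreover have "total_curvature \<gamma> a b * Sup (radius_curv \<gamma> a b ` {a..b}) /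
      (det2 q p * Inf (radius_curv \<gamma> a b ` {a..b})) powr (1/3) \<le> (b - a) * (M / m) ^ 3"
    unfolding \<gamma>_def using ab assms(2) m_pos speed by (rule parabola_curvature_ratio_le)
  moreover have "(b - a) * (M / m) ^ 3 < real n + 2"
    using T(3) by (simp add: a_def b_def m_def M_def algebra_simps)
  ultimately show ?thesis
    using that by fastforce
qed

theorem theorem8p1:
  fixes v0 v1 v2 :: "real^2" and n :: nat
  assumes "independent {v1, v2}" and "v1 \<noteq> v2" and "n \<ge> 2"
  shows "\<exists>\<gamma> a b. convex_curve \<gamma> a b \<and>
           card (\<gamma> ` {a..b} \<inter> lattice v0 v1 v2) = n \<and>
           (let L = curve_length \<gamma> a b; \<tau> = total_curvature \<gamma> a b;
                A = lattice_invariant v1 v2;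
                R1 = Inf (radius_curv \<gamma> a b ` {a..b});
                R2 = Sup (radius_curv \<gamma> a b ` {a..b})
            in L / (A * R1) powr (1/3) \<le> (\<tau> * R2 / (A * R1)) powr (1/3) * L powr (2/3) \<and>
               (\<tau> * R2 / (A * R1)) powr (1/3) * L powr (2/3) \<le> \<tau> * R2 / (A * R1) powr (1/3) \<and>
               \<tau> * R2 / (A * R1) powr (1/3) < real n + 2)"
proof -
  obtain p q where pq: "0 < det2 q p" "lattice v0 p q = lattice v0 v1 v2"
    "lattice_invariant v1 v2 = det2 q p"
  proof (cases "0 < det2 v2 v1")
    case True
    show ?thesis
      by (rule that[OF True refl]) (use True det2_swap[of v2 v1] in \<open>simp add: lattice_invariant_def\<close>)
  next
    case False
    then have pos: "0 < det2 v1 v2"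
      using det2_neq_0_if_independent[OF assms(1,2)] det2_swap[of v1 v2] by linarith
    show ?thesis
      by (rule that[OF pos lattice_swap]) (use pos in \<open>simp add: lattice_invariant_def\<close>)
  qed
  obtain a b where arc: "convex_curve (parabola v0 p q) a b"
    "card (parabola v0 p q ` {a..b} \<inter> lattice v0 p q) = n"
    "0 < det2 q p * Inf (radius_curv (parabola v0 p q) a b ` {a..b})"
    "total_curvature (parabola v0 p q) a b * Sup (radius_curv (parabola v0 p q) a b ` {a..b}) /
       (det2 q p * Inf (radius_curv (parabola v0 p q) a b ` {a..b})) powr (1/3) < real n + 2"
    using parabola_arc_exists[OF pq(1) assms(3)] by blast
  note interpolate = powr_one_third_interpolate[OF curve_length_nonneg
      convex_curve_length_le[OF arc(1)] less_imp_le[OF arc(3)]]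
  show ?thesis
    unfolding Let_def pq(3) pq(2)[symmetric]
    by (intro exI[of _ "parabola v0 p q"] exI[of _ a] exI[of _ b] conjI arc(1,2,4) interpolate)
qed

end
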